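(* Let $k=k(n)$ be integers with $1\le k=O(\log n)$, let $h(n)=o(n/\log^2 n)$ and let $\zeta(n)=o(2^{-k(n)})$. Then there is $n_0$ such that for all $n\ge n_0$ and every $X\subseteq Q=\{0,1\}^n$ with $\mu(X)\ge \exp[-h(n)]$, if $C$ is a uniformly random $k$-clause on $x_1,\dots,x_n$ then $$\Pr\big(\mu(C\wedge X)>(1-\zeta(n))\mu(X)\big)<1/2,$$ where $C\wedge X=\{x\in X: C(x)=1\}$.
   Context: $Q=\{0,1\}^n$ with uniform probability measure $\mu$. A uniformly random $k$-clause on $x_1,\dots,x_n$ is obtained by choosing a $k$-subset $K\subseteq[n]$ uniformly at random and a vector $g\in\{0,1\}^K$ uniformly at random; the clause is the Boolean function $C(x)=1$ iff $x_j=g_j$ for some $j\in K$. *)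

theory Defs
  imports Complex_Main "HOL-Library.FuncSet" "HOL-Library.Landau_Symbols"
begin

text \<open>The cube Q = {0,1}^n, coordinates indexed by 0..n-1 (x_1..x_n in the paper).\<close>
definition cube :: "nat \<Rightarrow> (nat \<Rightarrow> bool) set" where
  "cube n = {..<n} \<rightarrow>\<^sub>E (UNIV :: bool set)"

definition mu :: "nat \<Rightarrow> (nat \<Rightarrow> bool) set \<Rightarrow> real" where
  "mu n X = real (card (X \<inter> cube n)) / 2 ^ n"

text \<open>A k-clause is a pair (K,g): K a k-subset of the coordinates, g a 0/1 vector on K.
  A uniformly random k-clause = uniform K, then uniform g, i.e. uniform over these pairs.\<close>
definition clauses :: "nat \<Rightarrow> nat \<Rightarrow> (nat set \<times> (nat \<Rightarrow> bool)) set" where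
  "clauses n k = {(K, g). K \<subseteq> {..<n} \<and> card K = k \<and> g \<in> K \<rightarrow>\<^sub>E (UNIV :: bool set)}"

definition clause_val :: "nat set \<times> (nat \<Rightarrow> bool) \<Rightarrow> (nat \<Rightarrow> bool) \<Rightarrow> bool" where
  "clause_val C x = (\<exists>j\<in>fst C. x j = snd C j)"

definition clause_and :: "nat set \<times> (nat \<Rightarrow> bool) \<Rightarrow> (nat \<Rightarrow> bool) set \<Rightarrow> (nat \<Rightarrow> bool) set" where
  "clause_and C X = {x \<in> X. clause_val C x}"

definition clause_prob :: "nat \<Rightarrow> nat \<Rightarrow> (nat set \<times> (nat \<Rightarrow> bool) \<Rightarrow> bool) \<Rightarrow> real" where
  "clause_prob n k P = real (card {C \<in> clauses n k. P C}) / real (card (clauses n k))"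

end

theory Submission
  imports Defs "HOL-Real_Asymp.Real_Asymp"
begin

(*
  Fix X \<subseteq> {0,1}^n and write N = |X|.  For a set A of coordinates let D(A) be the
  entropy deficit of X on A: |A| ln 2 minus the Shannon entropy (in nats) of the restriction to A
  of a uniformly random point of X.
   (1) D is nonnegative and superadditive on disjoint coordinate sets (subadditivity of entropy),
       and D(all coordinates) = ln (1 / mu X) \<le> h(n).
   (2) Averaging over k-subsets K (a Han/Shearer type argument) gives
       (n div k) * avg_{|K| = k} D(K) \<le> D(all coordinates).
   (3) Call a pattern p on K rare if fewer than z*N points of X restrict to p.  If 2^|K| z \<le> \<eta>,
       the fraction of rare patterns among all 2^|K| is at most (D(K) - \<eta> ln \<eta>) / (1 - \<eta>).
   (4) The clause (K, g) removes less than a z-fraction of X exactly when the opposite pattern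
       \<not>g is rare on K, so the probability in the theorem is the average over K of the fraction
       of rare patterns.
  Hence (1 - \<eta>) * Pr \<le> h(n) / (n div k) - \<eta> ln \<eta>; with \<eta> = 1/100 and the growth hypotheses on
  k, h and \<zeta> this is eventually below 1/2.  The file follows this order: fibres and the entropy
  deficit, averages over k-subsets, rare patterns, clauses, and finally the asymptotics.
*)

definition fibre :: "('a \<Rightarrow> 'b) set \<Rightarrow> 'a set \<Rightarrow> ('a \<Rightarrow> 'b) \<Rightarrow> ('a \<Rightarrow> 'b) set" where
  "fibre X A x = {y \<in> X. restrict y A = restrict x A}"

lemma restrict_eq_iff: "restrict y A = restrict x A \<longleftrightarrow> (\<forall>j\<in>A. y j = x j)"
  by (auto simp: restrict_def fun_eq_iff)

lemma fibre_card_pos: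
  assumes "finite X" "x \<in> X"
  shows "card (fibre X A x) \<ge> 1"
proof -
  have "x \<in> fibre X A x" using assms(2) by (simp add: fibre_def)
  moreover have "finite (fibre X A x)" using assms(1) by (simp add: fibre_def)
  ultimately show ?thesis by (metis One_nat_def Suc_leI card_gt_0_iff empty_iff)
qed

(* Each fibre of a map r contributes exactly 1 to the sum of reciprocal fibre sizes. *)
lemma sum_inverse_fibre_sizes:
  assumes "finite S"
  shows "(\<Sum>x\<in>S. 1 / real (card {y\<in>S. r y = r x})) = real (card (r ` S))"
proof -
  have "(\<Sum>x\<in>S. 1 / real (card {y\<in>S. r y = r x})) =
        (\<Sum>p\<in>r ` S. \<Sum>x\<in>{x\<in>S. r x = p}. 1 / real (card {y\<in>S. r y = r x}))"
    by (rule sum.image_gen[OF assms])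
  also have "\<dots> = (\<Sum>p\<in>r ` S. 1)"
  proof (rule sum.cong[OF refl])
    fix p assume p: "p \<in> r ` S"
    have "(\<Sum>x\<in>{x\<in>S. r x = p}. 1 / real (card {y\<in>S. r y = r x}))
        = (\<Sum>x\<in>{x\<in>S. r x = p}. 1 / real (card {y\<in>S. r y = p}))"
      by (rule sum.cong) auto
    also have "\<dots> = 1" using p assms by auto
    finally show "(\<Sum>x\<in>{x\<in>S. r x = p}. 1 / real (card {y\<in>S. r y = r x})) = 1" .
  qed
  finally show ?thesis by simp
qed

lemma sum_inverse_fibres_le:
  assumes X: "finite X" and P: "finite P"
  shows "(\<Sum>x\<in>{x\<in>X. restrict x A \<in> P}. 1 / real (card (fibre X A x))) \<le> real (card P)"
proof -
  let ?S = "{x\<in>X. restrict x A \<in> P}"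
  have "(\<Sum>x\<in>?S. 1 / real (card (fibre X A x)))
      = (\<Sum>x\<in>?S. 1 / real (card {y\<in>?S. restrict y A = restrict x A}))"
    by (rule sum.cong[OF refl]) (auto simp: fibre_def intro!: arg_cong[where f=card])
  also have "\<dots> = real (card ((\<lambda>y. restrict y A) ` ?S))"
    by (rule sum_inverse_fibre_sizes) (use X in auto)
  also have "\<dots> \<le> real (card P)"
    by (intro of_nat_mono card_mono P) auto
  finally show ?thesis .
qed

(* Tangent-line bound for ln at l, written in terms of 1/t: the Gibbs inequality in disguise. *)
lemma ln_tangent_lower:
  fixes t l :: real assumes "t > 0" "l > 0"
  shows "ln l + 1 - l / t \<le> ln t"
proof -
  have "ln (l / t) \<le> l / t - 1" using assms by (intro ln_le_minus_one) auto
  moreover have "ln (l / t) = ln l - ln t" using assms by (simp add: ln_div)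
  ultimately show ?thesis by simp
qed

lemma card_bool_patterns: "finite A \<Longrightarrow> card (A \<rightarrow>\<^sub>E (UNIV :: bool set)) = 2 ^ card A"
  by (simp add: card_PiE)

(* The entropy deficit of X on the coordinates A:  |A| ln 2 - H(x|A) for x uniform on X,
   since the restriction x|A takes the value of x's pattern with probability |fibre| / N. *)
definition deficit :: "('a \<Rightarrow> bool) set \<Rightarrow> 'a set \<Rightarrow> real" where
  "deficit X A = (\<Sum>x\<in>X. ln (2 ^ card A * real (card (fibre X A x)) / real (card X))) / real (card X)"

lemma deficit_mult_card:
  "card X > 0 \<Longrightarrow> real (card X) * deficit X A
     = (\<Sum>x\<in>X. ln (2 ^ card A * real (card (fibre X A x)) / real (card X)))"
  unfolding deficit_def by simp

(* Lower bound for the part of the deficit sum coming from the points with pattern in P,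
   obtained from the tangent bound at an arbitrary l > 0; used with l = 1 and l = \<eta>. *)
lemma deficit_partial_sum_lower:
  assumes X: "finite X" "card X > 0" and P: "finite P" and l: "l > 0"
  shows "real (card {x\<in>X. restrict x A \<in> P}) * (ln l + 1) - l * real (card X) / 2 ^ card A * real (card P)
     \<le> (\<Sum>x\<in>{x\<in>X. restrict x A \<in> P}. ln (2 ^ card A * real (card (fibre X A x)) / real (card X)))"
proof -
  let ?S = "{x\<in>X. restrict x A \<in> P}"
  let ?N = "real (card X)"
  let ?c = "l * ?N / 2 ^ card A"
  have "(\<Sum>x\<in>?S. ln l + 1 - ?c * (1 / real (card (fibre X A x))))
      \<le> (\<Sum>x\<in>?S. ln (2 ^ card A * real (card (fibre X A x)) / ?N))"
  proof (rule sum_mono)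
    fix x assume x: "x \<in> ?S"
    have c: "real (card (fibre X A x)) \<ge> 1" using fibre_card_pos[OF X(1)] x by simp
    have "ln l + 1 - l / (2 ^ card A * real (card (fibre X A x)) / ?N)
        \<le> ln (2 ^ card A * real (card (fibre X A x)) / ?N)"
      by (rule ln_tangent_lower) (use c X l in auto)
    then show "ln l + 1 - ?c * (1 / real (card (fibre X A x)))
        \<le> ln (2 ^ card A * real (card (fibre X A x)) / ?N)"
      using c X by (simp add: field_simps)
  qed
  moreover have "(\<Sum>x\<in>?S. ln l + 1 - ?c * (1 / real (card (fibre X A x))))
      = real (card ?S) * (ln l + 1) - ?c * (\<Sum>x\<in>?S. 1 / real (card (fibre X A x)))"
    by (simp add: sum_subtractf sum_distrib_left)
  moreover have "?c * (\<Sum>x\<in>?S. 1 / real (card (fibre X A x))) \<le> ?c * real (card P)"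
    by (intro mult_left_mono sum_inverse_fibres_le X P) (use l in simp)
  ultimately show ?thesis by linarith
qed

(* Entropy never exceeds |A| ln 2. *)
lemma deficit_nonneg:
  assumes X: "finite X" "X \<noteq> {}" and A: "finite A"
  shows "deficit X A \<ge> 0"
proof -
  let ?P = "A \<rightarrow>\<^sub>E (UNIV :: bool set)"
  have N: "card X > 0" using X by auto
  have S: "{x\<in>X. restrict x A \<in> ?P} = X" by auto
  have "real (card {x\<in>X. restrict x A \<in> ?P}) * (ln 1 + 1) - 1 * real (card X) / 2 ^ card A * real (card ?P)
     \<le> (\<Sum>x\<in>{x\<in>X. restrict x A \<in> ?P}. ln (2 ^ card A * real (card (fibre X A x)) / real (card X)))"
    by (rule deficit_partial_sum_lower[OF X(1) N]) (use A in \<open>auto intro: finite_PiE\<close>)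
  then have "0 \<le> real (card X) * deficit X A"
    unfolding S card_bool_patterns[OF A] deficit_mult_card[OF N] by simp
  then show ?thesis using N by (simp add: zero_le_mult_iff)
qed

(* Counting triples: \<Sum>_x |fibre_A x| |fibre_B x| / |fibre_(A\<union>B) x| \<le> N^2.  Pairs (y, z) with
   y \<in> fibre_A x and z \<in> fibre_B x are counted by the x in a single (A \<union> B)-fibre. *)
lemma sum_fibre_product_ratio:
  assumes X: "finite X"
  shows "(\<Sum>x\<in>X. real (card (fibre X A x)) * real (card (fibre X B x)) / real (card (fibre X (A \<union> B) x)))
     \<le> real (card X) ^ 2"
proof -
  define R where "R = (\<lambda>x p. fst p \<in> fibre X A x \<and> snd p \<in> fibre X B x)"
  have pairs: "real (card (fibre X A x)) * real (card (fibre X B x)) = real (card {p\<in>X \<times> X. R x p})" for x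
  proof -
    have "{p\<in>X \<times> X. R x p} = fibre X A x \<times> fibre X B x"
      unfolding R_def fibre_def by auto
    then show ?thesis by (simp add: card_cartesian_product)
  qed
  have "(\<Sum>x\<in>X. real (card (fibre X A x)) * real (card (fibre X B x)) / real (card (fibre X (A \<union> B) x)))
      = (\<Sum>x\<in>X. \<Sum>p\<in>{p\<in>X \<times> X. R x p}. 1 / real (card (fibre X (A \<union> B) x)))"
    by (rule sum.cong[OF refl]) (simp add: pairs)
  also have "\<dots> = (\<Sum>p\<in>X \<times> X. \<Sum>x\<in>{x\<in>X. R x p}. 1 / real (card (fibre X (A \<union> B) x)))"
    by (rule sum.swap_restrict) (use X in auto)
  also have "\<dots> \<le> (\<Sum>p\<in>X \<times> X. 1)"
  proof (rule sum_mono)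
    fix p assume "p \<in> X \<times> X"
    let ?S = "{x\<in>X. R x p}"
    have "fibre X (A \<union> B) x = ?S" if "x \<in> ?S" for x
      using that by (auto simp: R_def fibre_def restrict_eq_iff)
    then have "(\<Sum>x\<in>?S. 1 / real (card (fibre X (A \<union> B) x))) = (\<Sum>x\<in>?S. 1 / real (card ?S))"
      by (intro sum.cong) auto
    also have "\<dots> \<le> 1" by (cases "?S = {}") (use X in auto)
    finally show "(\<Sum>x\<in>?S. 1 / real (card (fibre X (A \<union> B) x))) \<le> 1" .
  qed
  also have "\<dots> = real (card X) ^ 2"
    by (simp add: card_cartesian_product power2_eq_square)
  finally show ?thesis .
qed

(* Subadditivity of entropy, i.e. superadditivity of the deficit on disjoint coordinate sets. *)
lemma deficit_superadditive:
  assumes X: "finite X" "X \<noteq> {}" and A: "finite A" and B: "finite B" and AB: "A \<inter> B = {}"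
  shows "deficit X A + deficit X B \<le> deficit X (A \<union> B)"
proof -
  let ?N = "real (card X)"
  let ?f = "\<lambda>C x. real (card (fibre X C x))"
  let ?r = "\<lambda>x. ?f A x * ?f B x / ?f (A \<union> B) x"
  have N: "card X > 0" "?N > 0" using X by auto
  have pointwise: "1 - ?r x / ?N
      \<le> ln (2 ^ card (A \<union> B) * ?f (A \<union> B) x / ?N) - ln (2 ^ card A * ?f A x / ?N)
         - ln (2 ^ card B * ?f B x / ?N)" if x: "x \<in> X" for x
  proof -
    have pos: "?f C x > 0" for C using fibre_card_pos[OF X(1) x, of C] by simp
    have pow: "(2::real) ^ card (A \<union> B) = 2 ^ card A * 2 ^ card B"
      using A B AB by (simp add: card_Un_disjoint power_add)
    have "ln 1 + 1 - 1 / (?N * ?f (A \<union> B) x / (?f A x * ?f B x))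
        \<le> ln (?N * ?f (A \<union> B) x / (?f A x * ?f B x))"
      by (rule ln_tangent_lower) (use pos N in auto)
    moreover have "ln (?N * ?f (A \<union> B) x / (?f A x * ?f B x))
        = ln (2 ^ card (A \<union> B) * ?f (A \<union> B) x / ?N) - ln (2 ^ card A * ?f A x / ?N)
          - ln (2 ^ card B * ?f B x / ?N)"
      using pos N by (simp add: pow ln_div ln_mult)
    ultimately show ?thesis by (simp add: mult.commute)
  qed
  have "(\<Sum>x\<in>X. 1 - ?r x / ?N)
      \<le> ?N * deficit X (A \<union> B) - ?N * deficit X A - ?N * deficit X B"
    unfolding deficit_mult_card[OF N(1)] sum_subtractf[symmetric] by (rule sum_mono) (rule pointwise)
  moreover have "(\<Sum>x\<in>X. 1 - ?r x / ?N) = ?N - (\<Sum>x\<in>X. ?r x) / ?N"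
    by (simp add: sum_subtractf sum_divide_distrib)
  moreover have "?N - ?N ^ 2 / ?N \<le> ?N - (\<Sum>x\<in>X. ?r x) / ?N"
    using sum_fibre_product_ratio[OF X(1), of A B] N by (simp add: divide_right_mono)
  ultimately have "0 \<le> ?N * (deficit X (A \<union> B) - deficit X A - deficit X B)"
    using N by (simp add: power2_eq_square algebra_simps)
  then show ?thesis using N by (simp add: zero_le_mult_iff)
qed

definition subsets_card :: "'a set \<Rightarrow> nat \<Rightarrow> 'a set set" where
  "subsets_card U j = {A. A \<subseteq> U \<and> card A = j}"

definition subset_avg :: "'a set \<Rightarrow> ('a set \<Rightarrow> real) \<Rightarrow> nat \<Rightarrow> real" where
  "subset_avg U F j = (\<Sum>A\<in>subsets_card U j. F A) / real (card U choose j)"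

lemma finite_subsets_card: "finite U \<Longrightarrow> finite (subsets_card U j)"
  unfolding subsets_card_def by (rule finite_subset[of _ "Pow U"]) auto

lemma card_subsets_card: "finite U \<Longrightarrow> card (subsets_card U j) = card U choose j"
  unfolding subsets_card_def by (rule n_subsets)

lemma subsets_card_finite: "finite U \<Longrightarrow> A \<in> subsets_card U j \<Longrightarrow> finite A \<and> A \<subseteq> U \<and> card A = j"
  unfolding subsets_card_def using finite_subset by blast

lemma card_supersets:
  assumes U: "finite U" and K: "K \<in> subsets_card U j" and ja: "j \<le> a"
  shows "card {A \<in> subsets_card U a. K \<subseteq> A} = (card U - j) choose (a - j)"
proof -
  have KU: "K \<subseteq> U" and fK: "finite K" and cK: "card K = j"
    using subsets_card_finite[OF U K] by auto
  have "bij_betw (\<lambda>A. A - K) {A \<in> subsets_card U a. K \<subseteq> A} (subsets_card (U - K) (a - j))"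
  proof (rule bij_betw_byWitness[where f'="\<lambda>B. B \<union> K"])
    show "\<forall>A\<in>{A \<in> subsets_card U a. K \<subseteq> A}. A - K \<union> K = A" by auto
    show "\<forall>B\<in>subsets_card (U - K) (a - j). B \<union> K - K = B" by (auto simp: subsets_card_def)
    show "(\<lambda>A. A - K) ` {A \<in> subsets_card U a. K \<subseteq> A} \<subseteq> subsets_card (U - K) (a - j)"
      using cK fK by (auto simp: subsets_card_def card_Diff_subset)
    show "(\<lambda>B. B \<union> K) ` subsets_card (U - K) (a - j) \<subseteq> {A \<in> subsets_card U a. K \<subseteq> A}"
    proof (rule image_subsetI)
      fix B assume "B \<in> subsets_card (U - K) (a - j)"
      then have B: "finite B" "B \<subseteq> U - K" "card B = a - j"
        using subsets_card_finite[of "U - K" B] U by auto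
      then have "card (B \<union> K) = a" using fK cK ja by (subst card_Un_disjoint) auto
      then show "B \<union> K \<in> {A \<in> subsets_card U a. K \<subseteq> A}"
        using B KU by (auto simp: subsets_card_def)
    qed
  qed
  then have "card {A \<in> subsets_card U a. K \<subseteq> A} = card (U - K) choose (a - j)"
    by (simp add: bij_betw_same_card card_subsets_card U)
  also have "card (U - K) = card U - j" using KU fK cK by (simp add: card_Diff_subset)
  finally show ?thesis .
qed

lemma sum_subsets_of_subsets:
  fixes G :: "'a set \<Rightarrow> real"
  assumes U: "finite U" and ja: "j \<le> a"
  shows "(\<Sum>A\<in>subsets_card U a. \<Sum>K\<in>subsets_card A j. G K)
       = real ((card U - j) choose (a - j)) * (\<Sum>K\<in>subsets_card U j. G K)"
proof -
  have "(\<Sum>A\<in>subsets_card U a. \<Sum>K\<in>subsets_card A j. G K)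
      = (\<Sum>A\<in>subsets_card U a. \<Sum>K\<in>{K. K \<in> subsets_card U j \<and> K \<subseteq> A}. G K)"
    by (intro sum.cong refl) (auto simp: subsets_card_def)
  also have "\<dots> = (\<Sum>K\<in>subsets_card U j. \<Sum>A\<in>{A. A \<in> subsets_card U a \<and> K \<subseteq> A}. G K)"
    by (rule sum.swap_restrict) (use U finite_subsets_card in auto)
  also have "\<dots> = (\<Sum>K\<in>subsets_card U j. real ((card U - j) choose (a - j)) * G K)"
    by (intro sum.cong refl) (simp add: card_supersets[OF U _ ja])
  finally show ?thesis by (simp add: sum_distrib_left)
qed

lemma sum_complements:
  fixes G :: "'a set \<Rightarrow> real"
  assumes A: "finite A" and ka: "k \<le> card A"
  shows "(\<Sum>K\<in>subsets_card A k. G (A - K)) = (\<Sum>J\<in>subsets_card A (card A - k). G J)"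
proof (rule sum.reindex_bij_witness[where i="\<lambda>J. A - J" and j="\<lambda>K. A - K"])
  fix K assume "K \<in> subsets_card A k"
  then have "K \<subseteq> A" "finite K" "card K = k" using subsets_card_finite[OF A] by auto
  then show "A - (A - K) = K" "A - K \<in> subsets_card A (card A - k)"
    by (auto simp: subsets_card_def card_Diff_subset)
next
  fix J assume "J \<in> subsets_card A (card A - k)"
  then have "J \<subseteq> A" "finite J" "card J = card A - k" using subsets_card_finite[OF A] by auto
  then show "A - (A - J) = J" "A - J \<in> subsets_card A k"
    using ka by (auto simp: subsets_card_def card_Diff_subset)
qed simp

lemma sum_splittings:
  fixes F :: "'a set \<Rightarrow> real"
  assumes U: "finite U" and ka: "k \<le> a"
  shows "(\<Sum>A\<in>subsets_card U a. \<Sum>K\<in>subsets_card A k. F K + F (A - K))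
       = real ((card U - k) choose (a - k)) * (\<Sum>K\<in>subsets_card U k. F K)
         + real ((card U - (a - k)) choose k) * (\<Sum>J\<in>subsets_card U (a - k). F J)"
proof -
  have "(\<Sum>K\<in>subsets_card A k. F (A - K)) = (\<Sum>J\<in>subsets_card A (a - k). F J)"
    if "A \<in> subsets_card U a" for A
    using sum_complements[of A k F] subsets_card_finite[OF U that] ka by simp
  then have "(\<Sum>A\<in>subsets_card U a. \<Sum>K\<in>subsets_card A k. F (A - K))
      = (\<Sum>A\<in>subsets_card U a. \<Sum>J\<in>subsets_card A (a - k). F J)"
    by (rule sum.cong[OF refl])
  then show ?thesis
    using sum_subsets_of_subsets[OF U ka, of F] sum_subsets_of_subsets[OF U, of "a - k" a F] ka
    by (simp add: sum.distrib)
qed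

(* The k-average plus the (a-k)-average equals the average of F K + F (A - K) over the
   pairs K \<subseteq> A with |A| = a, |K| = k, since both sides count each set equally often. *)
lemma subset_avg_pairs:
  fixes F :: "'a set \<Rightarrow> real"
  assumes U: "finite U" and ka: "k \<le> a" and an: "a \<le> card U"
  shows "subset_avg U F k + subset_avg U F (a - k)
       = (\<Sum>A\<in>subsets_card U a. \<Sum>K\<in>subsets_card A k. F K + F (A - K))
         / (real (card U choose a) * real (a choose k))"
proof -
  let ?n = "card U"
  let ?S = "\<lambda>j. (\<Sum>A\<in>subsets_card U j. F A)"
  define D where "D = real (?n choose a) * real (a choose k)"
  have c1: "D = real (?n choose k) * real ((?n - k) choose (a - k))"
    unfolding D_def using choose_mult[OF ka an] by (metis of_nat_mult)
  have c2: "D = real (?n choose (a - k)) * real ((?n - (a - k)) choose k)"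
  proof -
    have "(?n choose a) * (a choose (a - k)) = (?n choose (a - k)) * ((?n - (a - k)) choose (a - (a - k)))"
      by (rule choose_mult) (use ka an in auto)
    then show ?thesis unfolding D_def using ka by (metis binomial_symmetric diff_diff_cancel of_nat_mult)
  qed
  have pos: "real (?n choose k) > 0" "real (?n choose (a - k)) > 0"
    "real ((?n - k) choose (a - k)) > 0" "real ((?n - (a - k)) choose k) > 0"
    using ka an by auto
  have "?S k / real (?n choose k) = real ((?n - k) choose (a - k)) * ?S k / D"
    unfolding c1 using pos by (simp add: field_simps)
  moreover have "?S (a - k) / real (?n choose (a - k)) = real ((?n - (a - k)) choose k) * ?S (a - k) / D"
    unfolding c2 using pos by (simp add: field_simps)
  ultimately show ?thesis
    unfolding subset_avg_def sum_splittings[OF U ka] D_def[symmetric] by (simp add: add_divide_distrib)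
qed

lemma subset_avg_superadditive:
  fixes F :: "'a set \<Rightarrow> real"
  assumes U: "finite U" and ka: "k \<le> a" and an: "a \<le> card U"
    and sup: "\<And>A B. A \<subseteq> U \<Longrightarrow> B \<subseteq> U \<Longrightarrow> A \<inter> B = {} \<Longrightarrow> F A + F B \<le> F (A \<union> B)"
  shows "subset_avg U F k + subset_avg U F (a - k) \<le> subset_avg U F a"
proof -
  have pos: "real (card U choose a) > 0" "real (a choose k) > 0" using ka an by simp_all
  have "(\<Sum>A\<in>subsets_card U a. \<Sum>K\<in>subsets_card A k. F K + F (A - K))
      \<le> (\<Sum>A\<in>subsets_card U a. \<Sum>K\<in>subsets_card A k. F A)"
  proof (intro sum_mono)
    fix A K assume "A \<in> subsets_card U a" "K \<in> subsets_card A k"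
    then have "F K + F (A - K) \<le> F (K \<union> (A - K))" by (intro sup) (auto simp: subsets_card_def)
    also have "K \<union> (A - K) = A" using \<open>K \<in> subsets_card A k\<close> by (auto simp: subsets_card_def)
    finally show "F K + F (A - K) \<le> F A" .
  qed
  also have "\<dots> = real (a choose k) * (\<Sum>A\<in>subsets_card U a. F A)"
    by (simp add: sum_distrib_left card_subsets_card subsets_card_finite[OF U])
  finally have "(\<Sum>A\<in>subsets_card U a. \<Sum>K\<in>subsets_card A k. F K + F (A - K))
        / (real (card U choose a) * real (a choose k))
      \<le> real (a choose k) * (\<Sum>A\<in>subsets_card U a. F A) / (real (card U choose a) * real (a choose k))"
    by (rule divide_right_mono) (use pos in simp)
  also have "\<dots> = subset_avg U F a"
    unfolding subset_avg_def using pos by (simp add: field_simps)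
  finally show ?thesis unfolding subset_avg_pairs[OF U ka an] .
qed

lemma subset_avg_nonneg:
  "(\<And>A. A \<subseteq> U \<Longrightarrow> F A \<ge> 0) \<Longrightarrow> subset_avg U F j \<ge> 0"
  unfolding subset_avg_def by (intro divide_nonneg_nonneg sum_nonneg) (auto simp: subsets_card_def)

lemma subset_avg_full: "finite U \<Longrightarrow> subset_avg U F (card U) = F U"
proof -
  assume U: "finite U"
  have "subsets_card U (card U) = {U}"
    unfolding subsets_card_def using U card_subset_eq by blast
  then show ?thesis unfolding subset_avg_def by simp
qed

lemma subset_avg_mono:
  "(\<And>A. A \<in> subsets_card U j \<Longrightarrow> F A \<le> G A) \<Longrightarrow> subset_avg U F j \<le> subset_avg U G j"
  unfolding subset_avg_def by (intro divide_right_mono sum_mono) auto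

lemma subset_avg_affine:
  assumes "finite U" "j \<le> card U"
  shows "subset_avg U (\<lambda>A. c * F A + d) j = c * subset_avg U F j + d"
  using assms unfolding subset_avg_def
  by (simp add: sum.distrib sum_distrib_left card_subsets_card add_divide_distrib)

(* Averaged superadditivity (a Han/Shearer type inequality):
   for nonnegative superadditive F, (|U| div k) times the k-average of F is at most F U. *)
lemma subset_avg_bound:
  assumes U: "finite U"
    and sup: "\<And>A B. A \<subseteq> U \<Longrightarrow> B \<subseteq> U \<Longrightarrow> A \<inter> B = {} \<Longrightarrow> F A + F B \<le> F (A \<union> B)"
    and nonneg: "\<And>A. A \<subseteq> U \<Longrightarrow> F A \<ge> 0"
  shows "real (card U div k) * subset_avg U F k \<le> F U"
proof -
  have multiple: "real j * subset_avg U F k \<le> subset_avg U F (j * k)" if "j * k \<le> card U" for j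
    using that
  proof (induction j)
    case 0
    then show ?case using subset_avg_nonneg[of U F] nonneg by simp
  next
    case (Suc j)
    have "subset_avg U F k + subset_avg U F (Suc j * k - k) \<le> subset_avg U F (Suc j * k)"
      by (rule subset_avg_superadditive[OF U _ Suc.prems sup]) auto
    then show ?case using Suc by (simp add: algebra_simps)
  qed
  let ?m = "card U div k"
  have mk: "?m * k \<le> card U" by (metis div_times_less_eq_dividend mult.commute)
  have "real ?m * subset_avg U F k \<le> subset_avg U F (?m * k)" by (rule multiple[OF mk])
  also have "\<dots> \<le> subset_avg U F (?m * k) + subset_avg U F (card U - ?m * k)"
    using subset_avg_nonneg[of U F] nonneg by simp
  also have "\<dots> \<le> subset_avg U F (card U)"
    by (rule subset_avg_superadditive[OF U mk le_refl sup])
  finally show ?thesis by (simp add: subset_avg_full[OF U])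
qed

definition rare_patterns :: "('a \<Rightarrow> bool) set \<Rightarrow> 'a set \<Rightarrow> real \<Rightarrow> ('a \<Rightarrow> bool) set" where
  "rare_patterns X K z =
     {p \<in> K \<rightarrow>\<^sub>E (UNIV :: bool set). real (card {x\<in>X. restrict x K = p}) < z * real (card X)}"

(* At most 2^|K| patterns, each carrying fewer than z * |X| points. *)
lemma card_points_with_rare_pattern:
  assumes X: "finite X" and K: "finite K" and z: "2 ^ card K * z \<le> \<eta>" and \<eta>: "0 \<le> \<eta>"
  shows "real (card {x\<in>X. restrict x K \<in> rare_patterns X K z}) \<le> \<eta> * real (card X)"
proof (cases "rare_patterns X K z = {}")
  case True
  then show ?thesis using \<eta> by simp
next
  case False
  let ?R = "rare_patterns X K z"
  have RPi: "?R \<subseteq> K \<rightarrow>\<^sub>E UNIV" unfolding rare_patterns_def by auto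
  have fR: "finite ?R" using RPi K by (meson finite_PiE finite_UNIV finite_subset)
  have cR: "card ?R \<le> 2 ^ card K"
    using card_mono[OF finite_PiE[OF K] RPi] K by (simp add: card_bool_patterns)
  have zN: "z * real (card X) \<ge> 0"
    using False unfolding rare_patterns_def by (auto intro: order.trans[rotated] less_imp_le)
  have "{x\<in>X. restrict x K \<in> ?R} = (\<Union>p\<in>?R. {x\<in>X. restrict x K = p})" by auto
  then have "real (card {x\<in>X. restrict x K \<in> ?R}) = (\<Sum>p\<in>?R. real (card {x\<in>X. restrict x K = p}))"
    by (simp only:) (subst card_UN_disjoint[OF fR], use X in auto)
  also have "\<dots> \<le> (\<Sum>p\<in>?R. z * real (card X))"
    by (rule sum_mono) (auto simp: rare_patterns_def less_imp_le)
  also have "\<dots> = real (card ?R) * (z * real (card X))" by simp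
  also have "\<dots> \<le> 2 ^ card K * (z * real (card X))"
    using cR zN by (intro mult_right_mono) (auto simp flip: of_nat_le_iff)
  also have "\<dots> \<le> \<eta> * real (card X)"
    using z X by (simp add: mult.assoc[symmetric] mult_right_mono)
  finally show ?thesis .
qed

(* Split the deficit sum over points with rare and non-rare patterns and apply the
   partial-sum bound with l = \<eta> and l = 1 respectively. *)
lemma rare_fraction_bound:
  assumes X: "finite X" "X \<noteq> {}" and K: "finite K" and \<eta>: "0 < \<eta>" "\<eta> \<le> 1"
    and z: "2 ^ card K * z \<le> \<eta>"
  shows "real (card (rare_patterns X K z)) / 2 ^ card K * (1 - \<eta>) \<le> deficit X K - \<eta> * ln \<eta>"
proof -
  let ?N = "real (card X)"
  let ?P = "K \<rightarrow>\<^sub>E (UNIV :: bool set)"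
  let ?f = "\<lambda>x. ln (2 ^ card K * real (card (fibre X K x)) / ?N)"
  define R where "R = rare_patterns X K z"
  define SR where "SR = {x\<in>X. restrict x K \<in> R}"
  define SC where "SC = {x\<in>X. restrict x K \<in> ?P - R}"
  define b where "b = real (card R) / 2 ^ card K"
  have N: "card X > 0" "?N > 0" using X by auto
  have RP: "R \<subseteq> ?P" unfolding R_def rare_patterns_def by auto
  have fP: "finite ?P" using K by (simp add: finite_PiE)
  have "card R \<le> 2 ^ card K" using card_mono[OF fP RP] K by (simp add: card_bool_patterns)
  then have cC: "real (card (?P - R)) = 2 ^ card K - real (card R)"
    using RP fP K by (simp add: card_Diff_subset finite_subset card_bool_patterns of_nat_diff)
  have split: "X = SR \<union> SC" "SR \<inter> SC = {}" and fin: "finite SR" "finite SC"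
    unfolding SR_def SC_def using X RP by auto
  have rare: "real (card SR) * (ln \<eta> + 1) - \<eta> * ?N / 2 ^ card K * real (card R) \<le> (\<Sum>x\<in>SR. ?f x)"
    unfolding SR_def by (rule deficit_partial_sum_lower[OF X(1) N(1) finite_subset[OF RP fP] \<eta>(1)])
  have "real (card SR) \<le> \<eta> * ?N"
    unfolding SR_def R_def by (rule card_points_with_rare_pattern[OF X(1) K z]) (use \<eta> in simp)
  then have lnSR: "\<eta> * ?N * ln \<eta> \<le> real (card SR) * ln \<eta>"
    using \<eta> by (intro mult_right_mono_neg) auto
  have cardX: "?N = real (card SR) + real (card SC)"
    using card_Un_disjoint[OF fin split(2)] split(1) by simp
  have e1: "\<eta> * ?N / 2 ^ card K * real (card R) = \<eta> * (?N * b)" unfolding b_def by simp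
  have e2: "1 * ?N / 2 ^ card K * real (card (?P - R)) = ?N - ?N * b"
    unfolding b_def cC by (simp add: field_simps)
  have e3: "real (card SR) * (ln \<eta> + 1) = real (card SR) * ln \<eta> + real (card SR)"
    by (simp add: algebra_simps)
  have common: "real (card SC) - (?N - ?N * b) \<le> (\<Sum>x\<in>SC. ?f x)"
    using deficit_partial_sum_lower[OF X(1) N(1), of "?P - R" 1 K] fP e2 unfolding SC_def by simp
  have "?N * deficit X K = (\<Sum>x\<in>SR. ?f x) + (\<Sum>x\<in>SC. ?f x)"
    unfolding deficit_mult_card[OF N(1)] using sum.union_disjoint[OF fin split(2)] split(1) by simp
  also have "\<dots> \<ge> \<eta> * ?N * ln \<eta> + ?N * b - \<eta> * (?N * b)"
    using rare common lnSR cardX e1 e3 by linarith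
  also have "\<eta> * ?N * ln \<eta> + ?N * b - \<eta> * (?N * b) = ?N * (\<eta> * ln \<eta> + b * (1 - \<eta>))"
    by (simp add: algebra_simps)
  finally have "\<eta> * ln \<eta> + b * (1 - \<eta>) \<le> deficit X K" using N by simp
  then show ?thesis unfolding b_def R_def by simp
qed

lemma finite_cube: "finite (cube n)"
  unfolding cube_def by (rule finite_PiE) auto

lemma mu_subset: "X \<subseteq> cube n \<Longrightarrow> mu n X = real (card X) / 2 ^ n"
  unfolding mu_def by (simp add: Int_absorb2)

(* On all n coordinates every fibre is a singleton, so D = ln (2^n / |X|) = - ln (mu X). *)
lemma deficit_all_coordinates:
  assumes X: "X \<subseteq> cube n" "X \<noteq> {}"
  shows "deficit X {..<n} = - ln (mu n X)"
proof -
  have fX: "finite X" using finite_subset[OF X(1) finite_cube] .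
  have N: "real (card X) > 0" using fX X by auto
  have "restrict y {..<n} = y" if "y \<in> X" for y
    using that X(1) unfolding cube_def by (intro PiE_restrict) auto
  then have "fibre X {..<n} x = {x}" if "x \<in> X" for x
    using that unfolding fibre_def by auto
  then have "deficit X {..<n} = ln (2 ^ n / real (card X))"
    unfolding deficit_def using N by simp
  also have "\<dots> = - ln (mu n X)"
    unfolding mu_subset[OF X(1)] using N by (simp add: ln_div)
  finally show ?thesis .
qed

(* The pattern on K opposite to g: the only pattern on which the clause (K, g) is false. *)
definition opposite_pattern :: "'a set \<Rightarrow> ('a \<Rightarrow> bool) \<Rightarrow> ('a \<Rightarrow> bool)" where
  "opposite_pattern K g = restrict (\<lambda>j. \<not> g j) K"

lemma opposite_pattern_PiE: "opposite_pattern K g \<in> K \<rightarrow>\<^sub>E (UNIV :: bool set)"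
  unfolding opposite_pattern_def by auto

lemma opposite_pattern_involution:
  "g \<in> K \<rightarrow>\<^sub>E (UNIV :: bool set) \<Longrightarrow> opposite_pattern K (opposite_pattern K g) = g"
  unfolding opposite_pattern_def by (auto simp: fun_eq_iff PiE_def extensional_def)

lemma clause_keeps_iff_rare:
  assumes X: "X \<subseteq> cube n"
  shows "(1 - z) * mu n X < mu n (clause_and (K, g) X)
     \<longleftrightarrow> opposite_pattern K g \<in> rare_patterns X K z"
proof -
  have fX: "finite X" using finite_subset[OF X finite_cube] .
  let ?E = "{x\<in>X. restrict x K = opposite_pattern K g}"
  have "clause_and (K, g) X = X - ?E"
    unfolding clause_and_def clause_val_def opposite_pattern_def by (auto simp: restrict_eq_iff)
  moreover have "card (X - ?E) = card X - card ?E" and "card ?E \<le> card X"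
    using fX by (auto intro: card_Diff_subset card_mono)
  ultimately have cards: "real (card (clause_and (K, g) X)) = real (card X) - real (card ?E)"
    by (simp add: of_nat_diff)
  have sub: "clause_and (K, g) X \<subseteq> cube n" using X unfolding clause_and_def by auto
  have "(1 - z) * mu n X < mu n (clause_and (K, g) X)
      \<longleftrightarrow> (1 - z) * real (card X) < real (card X) - real (card ?E)"
    unfolding mu_subset[OF X] mu_subset[OF sub] cards by (simp add: divide_less_cancel)
  also have "\<dots> \<longleftrightarrow> opposite_pattern K g \<in> rare_patterns X K z"
    using opposite_pattern_PiE[of K g] by (simp add: rare_patterns_def algebra_simps)
  finally show ?thesis .
qed

lemma card_keeping_clauses_on:
  assumes X: "X \<subseteq> cube n"
  shows "card {g \<in> K \<rightarrow>\<^sub>E (UNIV :: bool set). (1 - z) * mu n X < mu n (clause_and (K, g) X)}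
       = card (rare_patterns X K z)"
proof -
  let ?R = "rare_patterns X K z"
  have inv: "opposite_pattern K (opposite_pattern K p) = p" if "p \<in> ?R" for p
    using that opposite_pattern_involution unfolding rare_patterns_def by blast
  have "{g \<in> K \<rightarrow>\<^sub>E UNIV. (1 - z) * mu n X < mu n (clause_and (K, g) X)} = opposite_pattern K ` ?R"
  proof (intro equalityI subsetI)
    fix g assume "g \<in> {g \<in> K \<rightarrow>\<^sub>E UNIV. (1 - z) * mu n X < mu n (clause_and (K, g) X)}"
    then have g: "g \<in> K \<rightarrow>\<^sub>E UNIV" and "(1 - z) * mu n X < mu n (clause_and (K, g) X)" by simp_all
    then have "opposite_pattern K g \<in> ?R" using clause_keeps_iff_rare[OF X, of z K g] by simp
    moreover have "g = opposite_pattern K (opposite_pattern K g)"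
      using opposite_pattern_involution[OF g] by simp
    ultimately show "g \<in> opposite_pattern K ` ?R" by blast
  next
    fix g assume "g \<in> opposite_pattern K ` ?R"
    then obtain p where p: "p \<in> ?R" "g = opposite_pattern K p" by blast
    then have "opposite_pattern K g \<in> ?R" using inv by simp
    then have "(1 - z) * mu n X < mu n (clause_and (K, g) X)"
      using clause_keeps_iff_rare[OF X, of z K g] by simp
    then show "g \<in> {g \<in> K \<rightarrow>\<^sub>E UNIV. (1 - z) * mu n X < mu n (clause_and (K, g) X)}"
      using p(2) opposite_pattern_PiE by simp
  qed
  moreover have "inj_on (opposite_pattern K) ?R"
    by (rule inj_on_inverseI[where g="opposite_pattern K"]) (rule inv)
  ultimately show ?thesis by (simp add: card_image)
qed

lemma clauses_Sigma: "clauses n k = Sigma (subsets_card {..<n} k) (\<lambda>K. K \<rightarrow>\<^sub>E (UNIV :: bool set))"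
  unfolding clauses_def subsets_card_def by auto

lemma clause_prob_eq_avg_rare:
  assumes X: "X \<subseteq> cube n"
  shows "clause_prob n k (\<lambda>C. (1 - z) * mu n X < mu n (clause_and C X))
       = subset_avg {..<n} (\<lambda>K. real (card (rare_patterns X K z)) / 2 ^ k) k"
proof -
  let ?U = "{..<n}"
  have fin: "finite (subsets_card ?U k)" "\<And>K. K \<in> subsets_card ?U k \<Longrightarrow> finite (K \<rightarrow>\<^sub>E (UNIV :: bool set))"
    using finite_subsets_card subsets_card_finite[OF finite_lessThan] by (auto intro!: finite_PiE)
  have "card (clauses n k) = (\<Sum>K\<in>subsets_card ?U k. card (K \<rightarrow>\<^sub>E (UNIV :: bool set)))"
    unfolding clauses_Sigma by (rule card_SigmaI) (use fin in auto)
  also have "\<dots> = (\<Sum>K\<in>subsets_card ?U k. 2 ^ k)"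
  proof (rule sum.cong[OF refl])
    fix K assume "K \<in> subsets_card ?U k"
    then have "finite K" "card K = k" using subsets_card_finite[OF finite_lessThan] by blast+
    then show "card (K \<rightarrow>\<^sub>E (UNIV :: bool set)) = 2 ^ k" by (simp add: card_bool_patterns)
  qed
  finally have all: "card (clauses n k) = (n choose k) * 2 ^ k"
    by (simp add: card_subsets_card)
  have "{C \<in> clauses n k. (1 - z) * mu n X < mu n (clause_and C X)}
      = Sigma (subsets_card ?U k) (\<lambda>K. {g \<in> K \<rightarrow>\<^sub>E UNIV. (1 - z) * mu n X < mu n (clause_and (K, g) X)})"
    unfolding clauses_Sigma by auto
  then have keep: "card {C \<in> clauses n k. (1 - z) * mu n X < mu n (clause_and C X)}
      = (\<Sum>K\<in>subsets_card ?U k. card (rare_patterns X K z))"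
    using card_SigmaI[of "subsets_card ?U k"] fin by (simp add: card_keeping_clauses_on[OF X])
  show ?thesis
    unfolding clause_prob_def subset_avg_def all keep
    by (simp add: sum_divide_distrib[symmetric] field_simps)
qed

lemma clause_prob_bound:
  assumes X: "X \<subseteq> cube n" "X \<noteq> {}" and k: "1 \<le> k" "k \<le> n"
    and \<eta>: "0 < \<eta>" "\<eta> \<le> 1" and z: "2 ^ k * z \<le> \<eta>"
  shows "(1 - \<eta>) * clause_prob n k (\<lambda>C. (1 - z) * mu n X < mu n (clause_and C X))
       \<le> - ln (mu n X) / real (n div k) - \<eta> * ln \<eta>"
proof -
  let ?U = "{..<n}"
  have fX: "finite X" using finite_subset[OF X(1) finite_cube] .
  have fin: "\<And>A. A \<subseteq> ?U \<Longrightarrow> finite A" using finite_subset by blast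
  have m: "real (n div k) > 0" using k by (simp add: div_greater_zero_iff)
  have "real (n div k) * subset_avg ?U (deficit X) k \<le> deficit X ?U"
    using subset_avg_bound[of ?U "deficit X" k] deficit_superadditive[OF fX X(2)]
      deficit_nonneg[OF fX X(2)] fin by simp
  then have avg: "subset_avg ?U (deficit X) k \<le> - ln (mu n X) / real (n div k)"
    using m by (simp add: deficit_all_coordinates[OF X] field_simps)
  have "(1 - \<eta>) * clause_prob n k (\<lambda>C. (1 - z) * mu n X < mu n (clause_and C X))
      = subset_avg ?U (\<lambda>K. (1 - \<eta>) * (real (card (rare_patterns X K z)) / 2 ^ k) + 0) k"
    by (subst subset_avg_affine) (use k in \<open>simp_all add: clause_prob_eq_avg_rare[OF X(1)]\<close>)
  also have "\<dots> \<le> subset_avg ?U (\<lambda>K. 1 * deficit X K + - (\<eta> * ln \<eta>)) k"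
    using rare_fraction_bound[OF fX X(2) _ \<eta>] z
    by (intro subset_avg_mono) (auto simp: subsets_card_def fin mult.commute)
  also have "\<dots> = subset_avg ?U (deficit X) k - \<eta> * ln \<eta>"
    by (subst subset_avg_affine) (use k in simp_all)
  finally show ?thesis using avg by linarith
qed

lemma div_lower_bound:
  fixes n k :: nat assumes "k \<ge> 1" "k \<le> n"
  shows "real n \<le> 2 * real k * real (n div k)"
proof -
  have "n div k \<ge> 1" using assms by (simp add: Suc_le_eq div_greater_zero_iff)
  then have "k \<le> n div k * k" by simp
  moreover have "n = n div k * k + n mod k" and "n mod k < k" using assms by auto
  ultimately have "n \<le> 2 * (n div k * k)" by linarith
  then have "real n \<le> real (2 * (n div k * k))" by (simp only: of_nat_le_iff)
  then show ?thesis by (simp add: algebra_simps)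
qed

lemma ratio_bound:
  fixes n k :: nat and c e H :: real
  assumes k: "1 \<le> k" "k \<le> n" "real k \<le> c * ln (real n)" and L: "ln (real n) \<ge> 1"
    and H: "\<bar>H\<bar> \<le> e * (real n / (ln (real n))^2)" and e: "e \<ge> 0"
  shows "H / real (n div k) \<le> 2 * c * e"
proof -
  have n: "real n > 0" and m: "real (n div k) > 0" using k by (auto simp: div_greater_zero_iff)
  have "1 \<le> real k" using k(1) by simp
  then have "0 < c * ln (real n)" using k(3) by linarith
  then have c: "c \<ge> 0" using L by (auto simp: zero_less_mult_iff)
  have inv: "1 / real (n div k) \<le> 2 * real k / real n"
    using div_lower_bound[OF k(1,2)] m n by (simp add: field_simps)
  have "H / real (n div k) \<le> \<bar>H\<bar> * (1 / real (n div k))"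
    using divide_right_mono[OF abs_ge_self, of "real (n div k)" H] m by simp
  also have "\<dots> \<le> \<bar>H\<bar> * (2 * real k / real n)"
    by (rule mult_left_mono[OF inv]) simp
  also have "\<dots> \<le> e * (real n / (ln (real n))^2) * (2 * (c * ln (real n)) / real n)"
    using H k(3) n e by (intro mult_mono divide_right_mono) auto
  also have "\<dots> = 2 * c * e / ln (real n)"
    using n L by (simp add: power2_eq_square field_simps)
  also have "\<dots> \<le> 2 * c * e / 1" by (rule divide_left_mono) (use L c e in auto)
  finally show ?thesis by simp
qed

lemma eventually_good_parameters:
  fixes k :: "nat \<Rightarrow> nat" and h \<zeta> :: "nat \<Rightarrow> real"
  assumes k1: "\<And>n. 1 \<le> k n"
    and k: "(\<lambda>n. real (k n)) \<in> O(\<lambda>n. ln (real n))"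
    and h: "h \<in> o(\<lambda>n. real n / (ln (real n))^2)"
    and \<zeta>: "\<zeta> \<in> o(\<lambda>n. 1 / 2 ^ k n)"
  shows "eventually (\<lambda>n. k n \<le> n \<and> h n / real (n div k n) \<le> 1/10 \<and> 2 ^ k n * \<zeta> n \<le> 1/100) at_top"
proof -
  obtain c where c: "c > 0" and evK: "eventually (\<lambda>n. norm (real (k n)) \<le> c * norm (ln (real n))) at_top"
    using k by (elim landau_o.bigE)
  define e where "e = 1 / (20 * c)"
  have e: "e > 0" "2 * c * e = 1/10" using c by (simp_all add: e_def)
  have evH: "eventually (\<lambda>n. norm (h n) \<le> e * norm (real n / (ln (real n))^2)) at_top"
    by (rule landau_o.smallD[OF h e(1)])
  have evZ: "eventually (\<lambda>n. norm (\<zeta> n) \<le> 1/100 * norm (1 / 2 ^ k n :: real)) at_top"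
    using landau_o.smallD[OF \<zeta>, of "1/100"] by simp
  have "((\<lambda>n::nat. ln (real n) / real n) \<longlongrightarrow> 0) at_top" by real_asymp
  then have evL: "eventually (\<lambda>n::nat. ln (real n) / real n < 1 / (2 * c)) at_top"
    using c by (simp add: order_tendstoD(2))
  have "filterlim (\<lambda>n::nat. ln (real n)) at_top at_top" by real_asymp
  then have ev1: "eventually (\<lambda>n::nat. ln (real n) \<ge> 1) at_top" by (simp add: filterlim_at_top)
  show ?thesis
    using evK evH evZ evL ev1 eventually_ge_at_top[of "1::nat"]
  proof eventually_elim
    case (elim n)
    then have L: "ln (real n) \<ge> 1" and n: "real n > 0" by auto
    have kc: "real (k n) \<le> c * ln (real n)" using elim L by simp
    have "c * ln (real n) < real n / 2" using elim n c by (simp add: field_simps)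
    then have kn: "k n \<le> n" using kc by linarith
    have "\<bar>h n\<bar> \<le> e * (real n / (ln (real n))^2)" using elim n by simp
    then have "h n / real (n div k n) \<le> 1/10"
      using ratio_bound[OF k1 kn kc L _ less_imp_le[OF e(1)]] e(2) by simp
    moreover have "2 ^ k n * \<zeta> n \<le> 1/100" using elim by (simp add: field_simps abs_le_iff)
    ultimately show ?case using kn by blast
  qed
qed

lemma ln_100_le: "ln (100 :: real) \<le> 18"
proof -
  have "ln (10 :: real) \<le> 10 - 1" by (rule ln_le_minus_one) simp
  moreover have "ln (100 :: real) = ln 10 + ln 10" using ln_mult[of "10::real" 10] by simp
  ultimately show ?thesis by simp
qed

theorem claimB:
  fixes k :: "nat \<Rightarrow> nat" and h :: "nat \<Rightarrow> real" and \<zeta> :: "nat \<Rightarrow> real"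
  assumes "\<And>n. 1 \<le> k n"
    and "(\<lambda>n. real (k n)) \<in> O(\<lambda>n. ln (real n))"
    and "h \<in> o(\<lambda>n. real n / (ln (real n))^2)"
    and "\<zeta> \<in> o(\<lambda>n. 1 / 2 ^ k n)"
  shows "\<exists>n0. \<forall>n\<ge>n0. \<forall>X \<subseteq> cube n. mu n X \<ge> exp (- h n) \<longrightarrow>
           clause_prob n (k n) (\<lambda>C. mu n (clause_and C X) > (1 - \<zeta> n) * mu n X) < 1/2"
proof -
  obtain n0 where n0: "\<And>n. n \<ge> n0 \<Longrightarrow>
      k n \<le> n \<and> h n / real (n div k n) \<le> 1/10 \<and> 2 ^ k n * \<zeta> n \<le> 1/100"
    using eventually_good_parameters[OF assms] unfolding eventually_at_top_linorder by blast
  show ?thesis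
  proof (intro exI allI impI)
    fix n X assume "n \<ge> n0" and X: "X \<subseteq> cube n" and mu: "mu n X \<ge> exp (- h n)"
    let ?P = "clause_prob n (k n) (\<lambda>C. mu n (clause_and C X) > (1 - \<zeta> n) * mu n X)"
    note par = n0[OF \<open>n \<ge> n0\<close>]
    have pos: "mu n X > 0" using mu by (meson exp_gt_zero less_le_trans)
    then have ne: "X \<noteq> {}" by (auto simp: mu_def)
    have "- h n \<le> ln (mu n X)" using mu pos by (metis exp_gt_zero ln_exp ln_le_cancel_iff)
    then have "- ln (mu n X) \<le> h n" by simp
    moreover have "real (n div k n) > 0" using par assms(1)[of n] by (auto simp: div_greater_zero_iff)
    ultimately have "- ln (mu n X) / real (n div k n) \<le> h n / real (n div k n)"
      by (intro divide_right_mono) auto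
    then have "- ln (mu n X) / real (n div k n) \<le> 1/10" using par by linarith
    moreover have "(1 - 1/100) * ?P \<le> - ln (mu n X) / real (n div k n) - 1/100 * ln (1/100)"
      using clause_prob_bound[OF X ne assms(1)[of n] _ _ _, where \<eta> = "1/100" and z = "\<zeta> n"] par by simp
    ultimately show "?P < 1/2" using ln_100_le by (simp add: ln_div)
  qed
qed

end
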